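(* In the work extraction game described in the context, fix an initial state $\rho$ (energies $E_1,\dots,E_d$, occupation probabilities $\lambda_1,\dots,\lambda_d$), a final state $\sigma$ (energies $F_1,\dots,F_d$, occupation probabilities $\nu_1,\dots,\nu_d$), a number $\varepsilon\in[0,1)$ and a threshold $W\in\mathbb{R}$. Suppose a strategy $\mathcal S$ satisfies the following. It starts from the energies $E$ with the initial level distributed according to $\lambda$. It ends with the energies $F$. It succeeds, meaning that the total extracted work satisfies $W_{\rm tot}\ge W$, with probability at least $1-\varepsilon$. Conditioned on success, the final occupied level is distributed according to $\nu$. Then $$W\le W^\varepsilon(\rho\to\sigma)=kT\ln M\!\left(\tfrac{G^T(\rho)}{1-\varepsilon}\,\Big\|\,G^T(\sigma)\right).$$
   Context: Conventions. The constants $k>0$ (Boltzmann's constant) and $T>0$ (temperature) are fixed. A state is a finite-level system with energies $E_1,\dots,E_d\in\mathbb{R}\cup\{+\infty\}$, not all $+\infty$, together with a diagonal density matrix $\rho=\sum_i\lambda_i|e_i\rangle\langle e_i|$. Equivalently, it is a probability vector $(\lambda_i)$ over the levels, and we require $\lambda_i=0$ whenever $E_i=+\infty$. Gibbs rescaling. $G^T(\rho)$ is the function on $[0,\infty)$ built as follows. Each level $i$ with $E_i<\infty$ is represented by a block: an interval of length $e^{-E_i/kT}$ on which the function takes the constant value $\lambda_i e^{E_i/kT}$, so the block has area $\lambda_i$. The blocks are placed consecutively starting at $0$, in order of nonincreasing height. The function is $0$ beyond $Z=\sum_{i:E_i<\infty}e^{-E_i/kT}$. Thus $G^T(\rho)$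 is a nonincreasing probability density supported in $[0,Z]$. Relative mixedness. For nonincreasing integrable functions $f,g\ge 0$ on $[0,\infty)$, $$M(f\|g):=\max\Big\{m>0:\ \int_0^l f(x)\,dx\ge\int_0^{lm}g(x)\,dx\ \text{for all } l\ge 0\Big\}.$$ For $\varepsilon\in[0,1)$ define $$W^\varepsilon(\rho\to\sigma):=kT\ln M\big(G^T(\rho)/(1-\varepsilon)\,\big\|\,G^T(\sigma)\big).$$ Work extraction game. - A working medium has levels $1,\dots,d$. At each time it has an energy assignment $E\in(\mathbb{R}\cup\{+\infty\})^d$ and occupies exactly one (random) level. - For an assignment $E$, the Gibbs vector is $\gamma_E(i)=e^{-E_i/kT}/\sum_j e^{-E_j/kT}$, which is $0$ for levels at $+\infty$. - A strategy is a finite sequence of elementary steps, fixed in advance and independent of the random outcomes. Each step is one of two kinds. - (i) Thermalisation. Choose a $d\times d$ column-stochastic matrix $B$ with $B\gamma_E=\gamma_E$ for the current energies $E$. If the current level is $j$, the new level is $i$ with probability $B_{ij}$. Energies are unchanged and no work is exchanged. - (ii) Energy change. Choose a set $S$ of levels and new values for the energies of the levels in $S$; the other energies are unchanged and the occupied level is unchanged. If the occupied level $i$ lies in $S$, the work reservoir receives extracted work $E_i^{\rm old}-E_i^{\rm new}$; otherwise it receives $0$. (The paper changes all levels in $S$ by a common amount; arbitrary changes are compositions of such steps.) - The total extracted work $W_{\rm tot}$ is the sum over steps. By convention, a realisation in which some step yields work $-\infty$ (an occupied level raised to $+\infty$) has $W_{\rm tot}=-\infty$. - A run is successful for threshold $W$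 if $W_{\rm tot}\ge W$. *)

theory Defs
  imports "HOL-Analysis.Analysis" "HOL-Library.Extended_Real"
begin

(* Levels are 0..<d. Energies take values in ereal; the value -\<infinity> is
   excluded by explicit hypotheses, +\<infinity> is allowed.
   Throughout, kT denotes the product of Boltzmann's constant and the temperature. *)

definition bw :: "real \<Rightarrow> ereal \<Rightarrow> real" where
  "bw kT e = (if e = \<infinity> then 0 else exp (- real_of_ereal e / kT))"

definition gibbs_vec :: "real \<Rightarrow> nat \<Rightarrow> (nat \<Rightarrow> ereal) \<Rightarrow> nat \<Rightarrow> real" where
  "gibbs_vec kT d E i = bw kT (E i) / (\<Sum>j<d. bw kT (E j))"

definition is_state :: "nat \<Rightarrow> (nat \<Rightarrow> ereal) \<Rightarrow> (nat \<Rightarrow> real) \<Rightarrow> bool" where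
  "is_state d E lam \<longleftrightarrow>
     (\<forall>i<d. E i \<noteq> -\<infinity>) \<and> (\<exists>i<d. E i \<noteq> \<infinity>) \<and>
     (\<forall>i<d. 0 \<le> lam i) \<and> (\<Sum>i<d. lam i) = 1 \<and>
     (\<forall>i<d. E i = \<infinity> \<longrightarrow> lam i = 0)"

definition blk_height :: "real \<Rightarrow> (nat \<Rightarrow> ereal) \<Rightarrow> (nat \<Rightarrow> real) \<Rightarrow> nat \<Rightarrow> real" where
  "blk_height kT E lam i = lam i * exp (real_of_ereal (E i) / kT)"

definition blk_order :: "real \<Rightarrow> nat \<Rightarrow> (nat \<Rightarrow> ereal) \<Rightarrow> (nat \<Rightarrow> real) \<Rightarrow> nat list" where
  "blk_order kT d E lam = (SOME xs. distinct xs \<and> set xs = {i. i < d \<and> E i \<noteq> \<infinity>} \<and>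
        sorted_wrt (\<lambda>i j. blk_height kT E lam j \<le> blk_height kT E lam i) xs)"

definition blk_start :: "real \<Rightarrow> nat \<Rightarrow> (nat \<Rightarrow> ereal) \<Rightarrow> (nat \<Rightarrow> real) \<Rightarrow> nat \<Rightarrow> real" where
  "blk_start kT d E lam k = (\<Sum>m<k. bw kT (E (blk_order kT d E lam ! m)))"

definition gibbs_resc :: "real \<Rightarrow> nat \<Rightarrow> (nat \<Rightarrow> ereal) \<Rightarrow> (nat \<Rightarrow> real) \<Rightarrow> real \<Rightarrow> real" where
  "gibbs_resc kT d E lam x =
     (\<Sum>k<length (blk_order kT d E lam).
        if blk_start kT d E lam k \<le> x \<and> x < blk_start kT d E lam (Suc k)
        then blk_height kT E lam (blk_order kT d E lam ! k) else 0)"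

definition relmix :: "(real \<Rightarrow> real) \<Rightarrow> (real \<Rightarrow> real) \<Rightarrow> real" where
  "relmix f g = (GREATEST m. m > 0 \<and>
      (\<forall>l\<ge>0. integral {0..l} f \<ge> integral {0..l * m} g))"

definition W_eps :: "real \<Rightarrow> nat \<Rightarrow> (nat \<Rightarrow> ereal) \<Rightarrow> (nat \<Rightarrow> real) \<Rightarrow>
                     (nat \<Rightarrow> ereal) \<Rightarrow> (nat \<Rightarrow> real) \<Rightarrow> real \<Rightarrow> real" where
  "W_eps kT d E lam F nu eps =
     kT * ln (relmix (\<lambda>x. gibbs_resc kT d E lam x / (1 - eps)) (gibbs_resc kT d F nu))"

(* Therm B: thermalisation with column-stochastic B (B i j = prob of j \<rightarrow> i);
   Change S F': energies of the levels in S are set to F' *)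
datatype step = Therm "nat \<Rightarrow> nat \<Rightarrow> real" | Change "nat set" "nat \<Rightarrow> ereal"

fun apply_step :: "(nat \<Rightarrow> ereal) \<Rightarrow> step \<Rightarrow> (nat \<Rightarrow> ereal)" where
  "apply_step E (Therm B) = E"
| "apply_step E (Change S F') = (\<lambda>i. if i \<in> S then F' i else E i)"

definition energies_at :: "(nat \<Rightarrow> ereal) \<Rightarrow> step list \<Rightarrow> nat \<Rightarrow> (nat \<Rightarrow> ereal)" where
  "energies_at E ss k = foldl apply_step E (take k ss)"

definition final_energies :: "(nat \<Rightarrow> ereal) \<Rightarrow> step list \<Rightarrow> (nat \<Rightarrow> ereal)" where
  "final_energies E ss = foldl apply_step E ss"

fun valid_step :: "real \<Rightarrow> nat \<Rightarrow> (nat \<Rightarrow> ereal) \<Rightarrow> step \<Rightarrow> bool" where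
  "valid_step kT d E (Therm B) \<longleftrightarrow>
     (\<forall>i<d. \<forall>j<d. 0 \<le> B i j) \<and> (\<forall>j<d. (\<Sum>i<d. B i j) = 1) \<and>
     (\<forall>i<d. (\<Sum>j<d. B i j * gibbs_vec kT d E j) = gibbs_vec kT d E i)"
| "valid_step kT d E (Change S F') \<longleftrightarrow> S \<subseteq> {..<d} \<and> (\<forall>i\<in>S. F' i \<noteq> -\<infinity>)"

definition valid_strategy :: "real \<Rightarrow> nat \<Rightarrow> (nat \<Rightarrow> ereal) \<Rightarrow> step list \<Rightarrow> bool" where
  "valid_strategy kT d E ss \<longleftrightarrow>
     (\<forall>k<length ss. valid_step kT d (energies_at E ss k) (ss ! k))"

fun trans_prob :: "step \<Rightarrow> nat \<Rightarrow> nat \<Rightarrow> real" where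
  "trans_prob (Therm B) i j = B j i"
| "trans_prob (Change S F') i j = (if j = i then 1 else 0)"

fun step_work :: "(nat \<Rightarrow> ereal) \<Rightarrow> step \<Rightarrow> nat \<Rightarrow> ereal" where
  "step_work Eold (Therm B) i = 0"
| "step_work Eold (Change S F') i = (if i \<in> S then Eold i - F' i else 0)"

(* a realisation: the occupied levels at times 0, 1, ..., n *)
definition paths :: "nat \<Rightarrow> nat \<Rightarrow> nat list set" where
  "paths d n = {xs. length xs = Suc n \<and> set xs \<subseteq> {..<d}}"

definition path_prob :: "(nat \<Rightarrow> real) \<Rightarrow> step list \<Rightarrow> nat list \<Rightarrow> real" where
  "path_prob lam ss xs = lam (xs ! 0) * (\<Prod>k<length ss. trans_prob (ss ! k) (xs ! k) (xs ! Suc k))"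

definition path_work :: "(nat \<Rightarrow> ereal) \<Rightarrow> step list \<Rightarrow> nat list \<Rightarrow> ereal" where
  "path_work E ss xs =
     (if \<exists>k<length ss. step_work (energies_at E ss k) (ss ! k) (xs ! k) = -\<infinity> then -\<infinity>
      else (\<Sum>k<length ss. step_work (energies_at E ss k) (ss ! k) (xs ! k)))"

definition event_prob :: "nat \<Rightarrow> (nat \<Rightarrow> real) \<Rightarrow> step list \<Rightarrow> (nat list \<Rightarrow> bool) \<Rightarrow> real" where
  "event_prob d lam ss P = (\<Sum>xs\<in>{xs \<in> paths d (length ss). P xs}. path_prob lam ss xs)"

end

theory Submission
  imports Defs
begin

(* The argument has three layers.
   (1) A backward recursion over the strategy computes, for every starting level x, the
       expected value of a payoff f(final level) restricted to realisations whose work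
       passes a threshold (reward).  A single induction over the steps proves a
       Boltzmann-weighted second law (work_bound): thermalisations preserve the Gibbs
       weights, energy changes move the extracted work into the weights, so
         sum_x e^(-E_x/kT) e^(a_x/kT) reward_x(work \<ge> a_x) \<le> sum_i e^(-F_i/kT) f_i.
   (2) The integral of the Gibbs rescaling G(rho) over [0,x] is the optimum of a
       fractional knapsack problem: the maximum of sum_i t_i lam_i over 0 \<le> t \<le> 1 with
       budget sum_i t_i e^(-E_i/kT) \<le> x (greedy_filling_optimal, resc_integral_ge,
       resc_integral_attained).
   (3) Combining both with a payoff realising the optimum for sigma shows that
       m0 = e^(W/kT) is an admissible mixedness ratio (success_integral_bound); admissible
       ratios are bounded and form a closed set (mix_admissible_bounded, relmix_ge), so
       m0 \<le> M, which is the theorem after taking kT ln. *)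

section \<open>The game: strategies, realisations and the reward recursion\<close>

definition add_work :: "ereal \<Rightarrow> ereal \<Rightarrow> ereal" where
  "add_work w r = (if w = -\<infinity> \<or> r = -\<infinity> then -\<infinity> else w + r)"

text \<open>\<open>reward d E ss Q f x\<close>: starting in level \<open>x\<close> with energies \<open>E\<close>, the expected value of
  \<open>f\<close>(final level) over the realisations of \<open>ss\<close> whose total work satisfies \<open>Q\<close>.\<close>
fun reward :: "nat \<Rightarrow> (nat \<Rightarrow> ereal) \<Rightarrow> step list \<Rightarrow> (ereal \<Rightarrow> bool) \<Rightarrow> (nat \<Rightarrow> real) \<Rightarrow> nat \<Rightarrow> real"
where
  "reward d E [] Q f x = (if Q 0 then f x else 0)"
| "reward d E (s # ss) Q f x =
     (\<Sum>y<d. trans_prob s x y * reward d (apply_step E s) ss (\<lambda>r. Q (add_work (step_work E s x) r)) f y)"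

lemma energies_at_Cons:
  "energies_at E (s # ss) 0 = E"
  "energies_at E (s # ss) (Suc k) = energies_at (apply_step E s) ss k"
  by (simp_all add: energies_at_def)

lemma final_energies_Cons: "final_energies E (s # ss) = final_energies (apply_step E s) ss"
  by (simp add: final_energies_def)

lemma valid_strategy_Cons:
  "valid_strategy kT d E (s # ss) \<longleftrightarrow> valid_step kT d E s \<and> valid_strategy kT d (apply_step E s) ss"
  unfolding valid_strategy_def by (auto simp: All_less_Suc2 energies_at_Cons)

lemma path_prob_Cons: "path_prob w (s # ss) (x # xs) = w x * path_prob (trans_prob s x) ss xs"
  unfolding path_prob_def length_Cons prod.lessThan_Suc_shift by simp

lemma ereal_sum_not_minf:
  fixes g :: "nat \<Rightarrow> ereal"
  shows "\<forall>k<n. g k \<noteq> -\<infinity> \<Longrightarrow> (\<Sum>k<n. g k) \<noteq> -\<infinity>"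
  by (induction n) (auto simp: ereal_plus_eq_MInfty)

lemma path_work_Cons:
  "path_work E (s # ss) (x # xs) = add_work (step_work E s x) (path_work (apply_step E s) ss xs)"
proof -
  define g where "g k = step_work (energies_at E (s # ss) k) ((s # ss) ! k) ((x # xs) ! k)" for k
  define g' where "g' k = step_work (energies_at (apply_step E s) ss k) (ss ! k) (xs ! k)" for k
  have g0: "g 0 = step_work E s x" and gS: "g (Suc k) = g' k" for k
    by (simp_all add: g_def g'_def energies_at_Cons)
  have ex: "(\<exists>k<Suc (length ss). g k = -\<infinity>) \<longleftrightarrow> g 0 = -\<infinity> \<or> (\<exists>k<length ss. g' k = -\<infinity>)"
    by (auto simp: Ex_less_Suc2 gS)
  have sum: "(\<Sum>k<Suc (length ss). g k) = g 0 + (\<Sum>k<length ss. g' k)"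
    unfolding sum.lessThan_Suc_shift gS by simp
  show ?thesis
    using ereal_sum_not_minf[of "length ss" g']
    unfolding path_work_def g_def[symmetric] g'_def[symmetric] length_Cons ex sum g0 add_work_def
    by auto
qed

lemma finite_paths: "finite (paths d n)"
proof -
  have "paths d n \<subseteq> {xs. set xs \<subseteq> {..<d} \<and> length xs = Suc n}" by (auto simp: paths_def)
  then show ?thesis using finite_lists_length_eq[of "{..<d}" "Suc n"] finite_subset by blast
qed

lemma paths_0: "paths d 0 = (\<lambda>x. [x]) ` {..<d}"
  by (auto simp: paths_def length_Suc_conv)

lemma paths_Suc: "paths d (Suc n) = (\<lambda>(x, xs). x # xs) ` ({..<d} \<times> paths d n)"
  by (auto simp: paths_def length_Suc_conv image_iff)

lemma path_sum_reward:
  "(\<Sum>xs\<in>paths d (length ss). path_prob w ss xs * (if Q (path_work E ss xs) then f (last xs) else 0))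
   = (\<Sum>x<d. w x * reward d E ss Q f x)"
proof (induction ss arbitrary: E Q w)
  case Nil
  have "path_work E [] xs = 0" for xs by (simp add: path_work_def)
  then show ?case
    unfolding list.size(3) paths_0
    by (subst sum.reindex) (auto simp: inj_on_def path_prob_def intro!: sum.cong)
next
  case (Cons s ss)
  have inj: "inj_on (\<lambda>(x, xs). x # xs) ({..<d} \<times> paths d (length ss))" by (auto simp: inj_on_def)
  have last_Cons': "xs \<in> paths d (length ss) \<Longrightarrow> last (x # xs) = last xs" for x xs
    by (auto simp: paths_def)
  have Nil_notin: "[] \<notin> paths d n" for n by (simp add: paths_def)
  have "(\<Sum>xs\<in>paths d (length (s # ss)).
          path_prob w (s # ss) xs * (if Q (path_work E (s # ss) xs) then f (last xs) else 0))
     = (\<Sum>x<d. w x * (\<Sum>xs\<in>paths d (length ss). path_prob (trans_prob s x) ss xs *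
          (if Q (add_work (step_work E s x) (path_work (apply_step E s) ss xs)) then f (last xs) else 0)))"
    unfolding length_Cons paths_Suc
    by (subst sum.reindex[OF inj])
       (auto simp: sum.cartesian_product path_prob_Cons path_work_Cons last_Cons' Nil_notin sum_distrib_left
             mult.assoc intro!: sum.cong)
  also have "\<dots> = (\<Sum>x<d. w x * reward d E (s # ss) Q f x)"
    using Cons.IH[of "trans_prob s _" "\<lambda>r. Q (add_work (step_work E s _) r)" "apply_step E s"]
    by simp
  finally show ?case .
qed

lemma event_sum_reward:
  "(\<Sum>i<d. t i * event_prob d lam ss (\<lambda>xs. Q (path_work E ss xs) \<and> last xs = i))
   = (\<Sum>x<d. lam x * reward d E ss Q t x)"
proof -
  let ?P = "paths d (length ss)"
  have last_less: "last xs < d" if "xs \<in> ?P" for xs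
  proof -
    have "xs \<noteq> []" "set xs \<subseteq> {..<d}" using that by (auto simp: paths_def)
    then show ?thesis using last_in_set by blast
  qed
  have "(\<Sum>i<d. t i * event_prob d lam ss (\<lambda>xs. Q (path_work E ss xs) \<and> last xs = i))
      = (\<Sum>i<d. \<Sum>xs\<in>?P. if Q (path_work E ss xs) \<and> last xs = i then t i * path_prob lam ss xs else 0)"
    unfolding event_prob_def
    by (simp add: sum.inter_filter[OF finite_paths] sum_distrib_left if_distrib cong: if_cong)
  also have "\<dots> = (\<Sum>xs\<in>?P. \<Sum>i<d. if Q (path_work E ss xs) \<and> last xs = i then t i * path_prob lam ss xs else 0)"
    by (rule sum.swap)
  also have "\<dots> = (\<Sum>xs\<in>?P. path_prob lam ss xs * (if Q (path_work E ss xs) then t (last xs) else 0))"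
    using last_less by (intro sum.cong refl) (auto simp: if_distrib[of "\<lambda>c. c \<and> _"] sum.delta')
  also have "\<dots> = (\<Sum>x<d. lam x * reward d E ss Q t x)"
    by (rule path_sum_reward)
  finally show ?thesis .
qed

lemma trans_prob_nonneg: "valid_step kT d E s \<Longrightarrow> x < d \<Longrightarrow> y < d \<Longrightarrow> 0 \<le> trans_prob s x y"
  by (cases s) auto

lemma trans_prob_sum: "valid_step kT d E s \<Longrightarrow> x < d \<Longrightarrow> (\<Sum>y<d. trans_prob s x y) = 1"
  by (cases s) auto

lemma reward_nonneg:
  assumes "valid_strategy kT d E ss" "\<forall>i<d. 0 \<le> f i" "x < d"
  shows "0 \<le> reward d E ss Q f x"
  using assms
proof (induction ss arbitrary: E Q x)
  case (Cons s ss)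
  then have "valid_step kT d E s" "valid_strategy kT d (apply_step E s) ss"
    by (auto simp: valid_strategy_Cons)
  then show ?case
    using Cons.IH Cons.prems(2,3) trans_prob_nonneg by (auto intro!: sum_nonneg)
qed simp

lemma reward_le_one:
  assumes "valid_strategy kT d E ss" "\<forall>i<d. 0 \<le> f i \<and> f i \<le> 1" "x < d"
  shows "reward d E ss Q f x \<le> 1"
  using assms
proof (induction ss arbitrary: E Q x)
  case (Cons s ss)
  then have v: "valid_step kT d E s" "valid_strategy kT d (apply_step E s) ss"
    by (auto simp: valid_strategy_Cons)
  have "reward d E (s # ss) Q f x \<le> (\<Sum>y<d. trans_prob s x y)"
    using Cons.IH[OF v(2) Cons.prems(2)] trans_prob_nonneg[OF v(1) Cons.prems(3)]
    by (auto intro!: sum_mono simp: mult_left_le)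
  then show ?case using trans_prob_sum[OF v(1) Cons.prems(3)] by simp
qed simp


section \<open>A Boltzmann-weighted second law for strategies\<close>

lemma bw_nonneg: "0 \<le> bw kT e"
  by (simp add: bw_def)

text \<open>A thermalisation fixes the Gibbs vector, hence also the unnormalised Boltzmann weights.\<close>
lemma therm_preserves_bw:
  assumes "valid_step kT d E (Therm B)" and "y < d"
  shows "(\<Sum>x<d. B y x * bw kT (E x)) = bw kT (E y)"
proof -
  define Z where "Z = (\<Sum>j<d. bw kT (E j))"
  have gibbs: "(\<Sum>x<d. B y x * bw kT (E x)) / Z = bw kT (E y) / Z"
    using assms by (simp add: gibbs_vec_def Z_def sum_divide_distrib)
  show ?thesis
  proof (cases "Z = 0")
    case True
    then have "\<forall>j\<in>{..<d}. bw kT (E j) = 0"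
      unfolding Z_def using sum_nonneg_eq_0_iff[of "{..<d}" "\<lambda>j. bw kT (E j)"] bw_nonneg by auto
    then show ?thesis using \<open>y < d\<close> by simp
  next
    case False
    then show ?thesis using gibbs by simp
  qed
qed

text \<open>Averaging a payoff \<open>h y x\<close> through a nonnegative matrix that fixes the weights \<open>w\<close>
  is bounded by choosing, for every target \<open>y\<close>, the best source \<open>m y\<close>.\<close>
lemma weight_preserving_average_le:
  fixes B h :: "nat \<Rightarrow> nat \<Rightarrow> real" and w :: "nat \<Rightarrow> real"
  assumes B_nonneg: "\<forall>y<d. \<forall>x<d. 0 \<le> B y x" and w_nonneg: "\<forall>x<d. 0 \<le> w x"
    and fixes_w: "\<forall>y<d. (\<Sum>x<d. B y x * w x) = w y"
  shows "\<exists>m. (\<Sum>x<d. w x * (\<Sum>y<d. B y x * h y x)) \<le> (\<Sum>y<d. w y * h y (m y))"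
proof -
  have "\<exists>k. \<forall>x<d. h y x \<le> h y k" for y
  proof (cases "d = 0")
    case False
    then have "h y ` {..<d} \<noteq> {}" by auto
    then obtain k where "h y k = Max (h y ` {..<d})"
      using Max_in[of "h y ` {..<d}"] by (metis finite_imageI finite_lessThan imageE)
    then show ?thesis by (metis Max_ge finite_imageI finite_lessThan image_eqI lessThan_iff)
  qed simp
  then obtain m where m: "\<forall>y. \<forall>x<d. h y x \<le> h y (m y)" by metis
  have "(\<Sum>x<d. w x * (\<Sum>y<d. B y x * h y x)) = (\<Sum>y<d. \<Sum>x<d. B y x * w x * h y x)"
    by (subst sum.swap) (simp add: sum_distrib_left mult_ac)
  also have "\<dots> \<le> (\<Sum>y<d. \<Sum>x<d. B y x * w x * h y (m y))"
    using B_nonneg w_nonneg m by (intro sum_mono mult_left_mono) auto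
  also have "\<dots> = (\<Sum>y<d. w y * h y (m y))"
    using fixes_w by (intro sum.cong refl) (simp add: sum_distrib_right[symmetric])
  finally show ?thesis by blast
qed

lemma add_work_zero: "add_work 0 r = r"
  by (cases r) (auto simp: add_work_def)

lemma reward_False: "reward d E ss (\<lambda>r. False) f x = 0"
  by (induction ss arbitrary: E x) auto

text \<open>An energy change from \<open>E x\<close> to \<open>F' x\<close> extracts the work \<open>E x - F' x\<close>; this moves
  the threshold and the Boltzmann weight by compensating amounts.\<close>
lemma change_step_le:
  fixes kT :: real and E F' :: "nat \<Rightarrow> ereal" and S :: "nat set"
  defines "E' \<equiv> apply_step E (Change S F')"
  assumes valid: "valid_step kT d E (Change S F')" and x: "x < d" and E_x: "E x \<noteq> -\<infinity>"
    and nonneg: "\<And>c. 0 \<le> reward d E' ss (\<lambda>r. ereal c \<le> r) f x"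
  shows "\<exists>b. bw kT (E x) * exp (a / kT) * reward d E (Change S F' # ss) (\<lambda>r. ereal a \<le> r) f x
           \<le> bw kT (E' x) * exp (b / kT) * reward d E' ss (\<lambda>r. ereal b \<le> r) f x"
proof -
  have reward_step: "reward d E (Change S F' # ss) (\<lambda>r. ereal a \<le> r) f x
      = reward d E' ss (\<lambda>r. ereal a \<le> add_work (step_work E (Change S F') x) r) f x"
  proof -
    have "(\<Sum>y<d. (if y = x then 1 else 0) * g y) = g x" for g :: "nat \<Rightarrow> real"
      using x by (simp add: if_distrib[of "\<lambda>c. c * _"] sum.delta' cong: if_cong)
    then show ?thesis by (simp add: E'_def)
  qed
  have rhs_nonneg: "0 \<le> bw kT (E' x) * exp (a / kT) * reward d E' ss (\<lambda>r. ereal a \<le> r) f x"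
    using nonneg bw_nonneg by simp
  consider "E x = \<infinity>" | "x \<notin> S" | "E x \<noteq> \<infinity>" "x \<in> S" "F' x = \<infinity>"
    | e g where "E x = ereal e" "x \<in> S" "F' x = ereal g"
    using E_x valid by (cases "E x"; cases "F' x") auto
  then show ?thesis
  proof cases
    case 1
    then show ?thesis using rhs_nonneg by (auto simp: bw_def)
  next
    case 2
    then show ?thesis using reward_step by (auto simp: E'_def add_work_zero)
  next
    case 3
    with E_x have "(\<lambda>r. ereal a \<le> add_work (step_work E (Change S F') x) r) = (\<lambda>r. False)"
      by (cases "E x") (auto simp: add_work_def)
    then show ?thesis using reward_step rhs_nonneg by (auto simp: reward_False)
  next
    case (4 e g)
    define b where "b = a - (e - g)"
    have "(\<lambda>r. ereal a \<le> add_work (step_work E (Change S F') x) r) = (\<lambda>r. ereal b \<le> r)"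
      using 4 by (intro ext, case_tac r) (auto simp: add_work_def b_def)
    moreover have "bw kT (E x) * exp (a / kT) = bw kT (E' x) * exp (b / kT)"
      using 4 by (simp add: bw_def E'_def b_def exp_add[symmetric] diff_divide_distrib add_divide_distrib)
    ultimately show ?thesis using reward_step by auto
  qed
qed

lemma work_bound:
  assumes kT: "kT > 0"
  shows "valid_strategy kT d E ss \<Longrightarrow> \<forall>i<d. E i \<noteq> -\<infinity> \<Longrightarrow> \<forall>i<d. 0 \<le> f i \<Longrightarrow>
    (\<Sum>x<d. bw kT (E x) * exp (a x / kT) * reward d E ss (\<lambda>r. ereal (a x) \<le> r) f x)
      \<le> (\<Sum>i<d. bw kT (final_energies E ss i) * f i)"
proof (induction ss arbitrary: E a)
  case Nil
  have "bw kT (E x) * exp (a x / kT) * (if ereal (a x) \<le> 0 then f x else 0) \<le> bw kT (E x) * f x"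
    if "x < d" for x
  proof -
    have "exp (a x / kT) \<le> 1" if "a x \<le> 0" using that kT by (simp add: divide_nonpos_pos)
    then show ?thesis using Nil.prems(3) that bw_nonneg[of kT "E x"]
      by (auto simp: mult.assoc mult_left_le_one_le intro: mult_left_mono)
  qed
  then show ?case by (auto simp: final_energies_def intro: sum_mono)
next
  case (Cons s ss)
  then have v: "valid_step kT d E s" "valid_strategy kT d (apply_step E s) ss"
    by (auto simp: valid_strategy_Cons)
  define E' where "E' = apply_step E s"
  have reward_nonneg: "0 \<le> reward d E' ss Q f x" if "x < d" for Q x
    using reward_nonneg[OF v(2)[folded E'_def] Cons.prems(3) that] .
  show ?case
  proof (cases s)
    case (Therm B)
    have E': "E' = E" using Therm by (simp add: E'_def)
    let ?h = "\<lambda>y x. exp (a x / kT) * reward d E ss (\<lambda>r. ereal (a x) \<le> r) f y"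
    obtain m where m: "(\<Sum>x<d. bw kT (E x) * (\<Sum>y<d. B y x * ?h y x)) \<le> (\<Sum>y<d. bw kT (E y) * ?h y (m y))"
      using weight_preserving_average_le[of d B "\<lambda>x. bw kT (E x)" ?h] v(1) Therm
        therm_preserves_bw[of kT d E B] bw_nonneg by auto
    have "(\<Sum>x<d. bw kT (E x) * exp (a x / kT) * reward d E (s # ss) (\<lambda>r. ereal (a x) \<le> r) f x)
        = (\<Sum>x<d. bw kT (E x) * (\<Sum>y<d. B y x * ?h y x))"
      by (simp add: Therm add_work_zero sum_distrib_left mult_ac)
    also have "\<dots> \<le> (\<Sum>y<d. bw kT (E y) * exp (a (m y) / kT) * reward d E ss (\<lambda>r. ereal (a (m y)) \<le> r) f y)"
      using m by (simp add: mult.assoc)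
    also have "\<dots> \<le> (\<Sum>i<d. bw kT (final_energies E ss i) * f i)"
      using Cons.IH[of E "\<lambda>y. a (m y)"] Cons.prems v(2) Therm by simp
    finally show ?thesis by (simp add: final_energies_Cons Therm)
  next
    case (Change S F')
    have "\<forall>x. \<exists>b. x < d \<longrightarrow> bw kT (E x) * exp (a x / kT) * reward d E (s # ss) (\<lambda>r. ereal (a x) \<le> r) f x
           \<le> bw kT (E' x) * exp (b / kT) * reward d E' ss (\<lambda>r. ereal b \<le> r) f x"
      using change_step_le[of kT d E S F'] v(1) Cons.prems(2) reward_nonneg
      unfolding Change E'_def by blast
    then obtain b where b: "\<forall>x<d. bw kT (E x) * exp (a x / kT) * reward d E (s # ss) (\<lambda>r. ereal (a x) \<le> r) f x
           \<le> bw kT (E' x) * exp (b x / kT) * reward d E' ss (\<lambda>r. ereal (b x) \<le> r) f x"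
      by metis
    have E'_fin: "\<forall>i<d. E' i \<noteq> -\<infinity>" using Cons.prems(2) v(1) by (auto simp: E'_def Change)
    have "(\<Sum>x<d. bw kT (E x) * exp (a x / kT) * reward d E (s # ss) (\<lambda>r. ereal (a x) \<le> r) f x)
       \<le> (\<Sum>x<d. bw kT (E' x) * exp (b x / kT) * reward d E' ss (\<lambda>r. ereal (b x) \<le> r) f x)"
      using b by (intro sum_mono) auto
    also have "\<dots> \<le> (\<Sum>i<d. bw kT (final_energies E' ss i) * f i)"
      using Cons.IH[of E' b] v(2) E'_fin Cons.prems(3) by (simp add: E'_def)
    finally show ?thesis by (simp add: final_energies_Cons E'_def)
  qed
qed


section \<open>Step functions built from consecutive blocks\<close>

text \<open>Blocks of widths \<open>b 0, b 1, \<dots>\<close> are laid out consecutively from \<open>0\<close>;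
  \<open>block_fill b k x\<close> is the length of the part of block \<open>k\<close> lying in \<open>[0,x]\<close>.\<close>
definition block_fill :: "(nat \<Rightarrow> real) \<Rightarrow> nat \<Rightarrow> real \<Rightarrow> real" where
  "block_fill b k x = min (max (x - (\<Sum>m<k. b m)) 0) (b k)"

lemma block_fill_bounds: "0 \<le> b k \<Longrightarrow> 0 \<le> block_fill b k x \<and> block_fill b k x \<le> b k"
  by (auto simp: block_fill_def)

lemma block_fill_lipschitz: "0 \<le> b k \<Longrightarrow> z \<le> y \<Longrightarrow> block_fill b k y - block_fill b k z \<le> y - z"
  by (auto simp: block_fill_def min_def max_def)

lemma block_fill_sum:
  assumes "\<And>k. k < n \<Longrightarrow> 0 \<le> b k" "0 \<le> x"
  shows "m \<le> n \<Longrightarrow> (\<Sum>k<m. block_fill b k x) = min x (\<Sum>k<m. b k)"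
proof (induction m)
  case (Suc m)
  then have "0 \<le> b m" using assms by auto
  then show ?case using Suc by (auto simp: block_fill_def min_def max_def)
qed (use assms in simp)

lemma block_step_integral:
  fixes b h :: "nat \<Rightarrow> real"
  assumes b: "\<And>k. k < n \<Longrightarrow> 0 \<le> b k" and x: "0 \<le> x"
  shows "((\<lambda>y. \<Sum>k<n. if (\<Sum>m<k. b m) \<le> y \<and> y < (\<Sum>m<Suc k. b m) then h k else 0) has_integral
          (\<Sum>k<n. h k * block_fill b k x)) {0..x}"
proof (rule has_integral_sum)
  fix k assume k: "k \<in> {..<n}"
  define s where "s = (\<Sum>m<k. b m)"
  have s0: "0 \<le> s" unfolding s_def using b k by (auto intro: sum_nonneg)
  have bk: "0 \<le> b k" using b k by auto
  define T where "T = {s .. min x (s + b k)}"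
  have on_T: "((\<lambda>y. h k) has_integral (h k * block_fill b k x)) T"
  proof (cases "s \<le> x")
    case True
    then have "s \<le> min x (s + b k)" and "min x (s + b k) - s = block_fill b k x"
      using bk by (auto simp: block_fill_def s_def min_def max_def)
    then show ?thesis using has_integral_const_real[of "h k" s "min x (s + b k)"]
      unfolding T_def by (simp add: mult.commute)
  next
    case False
    then show ?thesis using bk by (simp add: T_def block_fill_def s_def)
  qed
  have "((\<lambda>y. h k) has_integral (h k * block_fill b k x)) ({s..<s + b k} \<inter> {0..x})"
  proof (rule iffD1[OF has_integral_spike_set_eq on_T])
    show "negligible {y \<in> T - {s..<s + b k} \<inter> {0..x}. h k \<noteq> 0}"
      by (rule negligible_subset[of "{s + b k}"]) (use s0 in \<open>auto simp: T_def\<close>)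
    show "negligible {y \<in> {s..<s + b k} \<inter> {0..x} - T. h k \<noteq> 0}"
      by (rule negligible_subset[of "{}"]) (auto simp: T_def)
  qed
  then show "((\<lambda>y. if (\<Sum>m<k. b m) \<le> y \<and> y < (\<Sum>m<Suc k. b m) then h k else 0) has_integral
      (h k * block_fill b k x)) {0..x}"
    by (subst (asm) has_integral_restrict_Int[symmetric]) (simp add: s_def)
qed simp

text \<open>The comparison uses the density \<open>h k0\<close> of the block containing \<open>x\<close>.\<close>
lemma greedy_filling_optimal:
  fixes b h u :: "nat \<Rightarrow> real"
  assumes b: "\<And>k. k < n \<Longrightarrow> 0 \<le> b k"
    and h: "\<And>k. k < n \<Longrightarrow> 0 \<le> h k"
    and h_mono: "\<And>i j. i \<le> j \<Longrightarrow> j < n \<Longrightarrow> h j \<le> h i"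
    and u: "\<And>k. k < n \<Longrightarrow> 0 \<le> u k \<and> u k \<le> 1"
    and x: "0 \<le> x" and budget: "(\<Sum>k<n. u k * b k) \<le> x"
  shows "(\<Sum>k<n. u k * h k * b k) \<le> (\<Sum>k<n. h k * block_fill b k x)"
proof -
  define s where "s k = (\<Sum>m<k. b m)" for k
  have s_mono: "s i \<le> s j" if "i \<le> j" "j \<le> n" for i j
    unfolding s_def using that b by (intro sum_mono2) auto
  have fill: "block_fill b k x = min (max (x - s k) 0) (b k)" for k
    by (simp add: block_fill_def s_def)
  have diff: "(\<Sum>k<n. u k * h k * b k) - (\<Sum>k<n. h k * block_fill b k x)
      = (\<Sum>k<n. (u k * b k - block_fill b k x) * h k)"
    by (simp add: sum_subtractf algebra_simps)
  have "(\<Sum>k<n. (u k * b k - block_fill b k x) * h k) \<le> 0"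
  proof (cases "s n \<le> x")
    case True
    have "block_fill b k x = b k" if "k < n" for k
      using s_mono[of "Suc k" n] that True b[OF that] by (simp add: fill s_def)
    then show ?thesis using u b h
      by (intro sum_nonpos) (simp add: mult_nonpos_nonneg mult_left_le_one_le)
  next
    case False
    define k0 where "k0 = Max {k. k < n \<and> s k \<le> x}"
    have n_pos: "0 < n" using False x by (cases n) (auto simp: s_def)
    have fin: "finite {k. k < n \<and> s k \<le> x}" and ne: "0 \<in> {k. k < n \<and> s k \<le> x}"
      using n_pos x by (auto simp: s_def)
    have "k0 \<in> {k. k < n \<and> s k \<le> x}" unfolding k0_def using Max_in[OF fin] ne by blast
    then have k0: "k0 < n" "s k0 \<le> x" by auto
    have above: "x < s (Suc k0)"
    proof (cases "Suc k0 < n")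
      case True
      then show ?thesis using Max_ge[OF fin, of "Suc k0"] by (fastforce simp: k0_def)
    next
      case False
      then have "Suc k0 = n" using k0(1) by simp
      then show ?thesis using \<open>\<not> s n \<le> x\<close> by simp
    qed
    have term_le: "(u k * b k - block_fill b k x) * h k \<le> (u k * b k - block_fill b k x) * h k0"
      if k: "k < n" for k
    proof -
      consider "k < k0" | "k = k0" | "k0 < k" by linarith
      then show ?thesis
      proof cases
        case 1
        then have "block_fill b k x = b k"
          using s_mono[of "Suc k" k0] k0 b[OF k] by (simp add: fill s_def)
        moreover have "u k * b k \<le> b k" using u[OF k] b[OF k] by (simp add: mult_left_le_one_le)
        ultimately show ?thesis using h_mono[of k k0] 1 k0(1) by (simp add: mult_left_mono_neg)
      next
        case 3
        then have "block_fill b k x = 0"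
          using s_mono[of "Suc k0" k] k above b[OF k] by (simp add: fill)
        then show ?thesis using h_mono[of k0 k] 3 k u[OF k] b[OF k] by (simp add: mult_left_mono)
      qed simp
    qed
    have "(\<Sum>k<n. (u k * b k - block_fill b k x) * h k) \<le> (\<Sum>k<n. (u k * b k - block_fill b k x) * h k0)"
      using term_le by (intro sum_mono) auto
    also have "\<dots> = h k0 * ((\<Sum>k<n. u k * b k) - (\<Sum>k<n. block_fill b k x))"
      by (simp add: sum_distrib_left sum_subtractf algebra_simps)
    also have "(\<Sum>k<n. block_fill b k x) = x"
      using block_fill_sum[OF b x, of n] False by (simp add: s_def)
    also have "h k0 * ((\<Sum>k<n. u k * b k) - x) \<le> 0"
      using h[OF k0(1)] budget by (simp add: mult_nonneg_nonpos)
    finally show ?thesis .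
  qed
  then show ?thesis using diff by simp
qed


section \<open>The Gibbs rescaling as a knapsack value\<close>

lemma blk_order_spec:
  "distinct (blk_order kT d E lam) \<and> set (blk_order kT d E lam) = {i. i < d \<and> E i \<noteq> \<infinity>} \<and>
   sorted_wrt (\<lambda>i j. blk_height kT E lam j \<le> blk_height kT E lam i) (blk_order kT d E lam)"
proof -
  define xs where
    "xs = sort_key (\<lambda>i. - blk_height kT E lam i) (sorted_list_of_set {i. i < d \<and> E i \<noteq> \<infinity>})"
  have "sorted (map (\<lambda>i. - blk_height kT E lam i) xs)" unfolding xs_def by (rule sorted_sort_key)
  then have "sorted_wrt (\<lambda>i j. blk_height kT E lam j \<le> blk_height kT E lam i) xs"
    by (simp add: sorted_wrt_map)
  then have "distinct xs \<and> set xs = {i. i < d \<and> E i \<noteq> \<infinity>} \<and>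
        sorted_wrt (\<lambda>i j. blk_height kT E lam j \<le> blk_height kT E lam i) xs"
    unfolding xs_def by simp
  then show ?thesis unfolding blk_order_def by (rule someI)
qed

lemma sum_over_distinct_list:
  fixes g :: "nat \<Rightarrow> real"
  assumes "distinct xs" "set xs \<subseteq> {..<d}" "\<And>i. i < d \<Longrightarrow> i \<notin> set xs \<Longrightarrow> g i = 0"
  shows "(\<Sum>i<d. g i) = (\<Sum>k<length xs. g (xs ! k))"
proof -
  have "(\<Sum>i<d. g i) = (\<Sum>i\<in>set xs. g i)"
    using assms by (intro sum.mono_neutral_right) auto
  also have "\<dots> = (\<Sum>k<length xs. g (xs ! k))"
    using assms(1) by (simp add: sum_list_distinct_conv_sum_set[symmetric] sum_list_sum_nth atLeast0LessThan)
  finally show ?thesis .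
qed

locale gibbs_rescaling =
  fixes kT :: real and d :: nat and E :: "nat \<Rightarrow> ereal" and lam :: "nat \<Rightarrow> real"
  assumes kT_pos: "kT > 0" and state: "is_state d E lam"
begin

abbreviation "\<pi> \<equiv> blk_order kT d E lam"
abbreviation "n \<equiv> length \<pi>"

definition width :: "nat \<Rightarrow> real" where "width k = bw kT (E (\<pi> ! k))"
definition height :: "nat \<Rightarrow> real" where "height k = blk_height kT E lam (\<pi> ! k)"

lemma \<pi>_distinct: "distinct \<pi>" and \<pi>_set: "set \<pi> = {i. i < d \<and> E i \<noteq> \<infinity>}"
  and \<pi>_sorted: "sorted_wrt (\<lambda>i j. blk_height kT E lam j \<le> blk_height kT E lam i) \<pi>"
  using blk_order_spec by auto

lemma \<pi>_nth: "k < n \<Longrightarrow> \<pi> ! k < d \<and> E (\<pi> ! k) \<noteq> \<infinity>"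
  using \<pi>_set nth_mem by blast

lemma E_not_minf: "i < d \<Longrightarrow> E i \<noteq> -\<infinity>"
  and lam_nonneg: "i < d \<Longrightarrow> 0 \<le> lam i"
  and lam_infinite: "i < d \<Longrightarrow> E i = \<infinity> \<Longrightarrow> lam i = 0"
  using state by (auto simp: is_state_def)

lemma width_pos: "k < n \<Longrightarrow> 0 < width k"
  using \<pi>_nth by (simp add: width_def bw_def)

lemma width_nonneg: "k < n \<Longrightarrow> 0 \<le> width k"
  using width_pos less_imp_le by blast

lemma block_fill_width: "k < n \<Longrightarrow> 0 \<le> block_fill width k x \<and> block_fill width k x \<le> width k"
  using block_fill_bounds width_nonneg by blast

lemma height_nonneg: "k < n \<Longrightarrow> 0 \<le> height k"
  using \<pi>_nth lam_nonneg by (simp add: height_def blk_height_def)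

lemma height_mono: "i \<le> j \<Longrightarrow> j < n \<Longrightarrow> height j \<le> height i"
  using sorted_wrt_nth_less[OF \<pi>_sorted, of i j] by (cases "i = j") (auto simp: height_def)

lemma lam_block_area: "k < n \<Longrightarrow> lam (\<pi> ! k) = height k * width k"
proof -
  assume k: "k < n"
  then obtain e where e: "E (\<pi> ! k) = ereal e" using \<pi>_nth E_not_minf by (cases "E (\<pi> ! k)") auto
  have "exp (e / kT) * exp (- e / kT) = 1" by (simp add: exp_add[symmetric])
  then show ?thesis using e by (simp add: height_def width_def blk_height_def bw_def mult.assoc)
qed

lemma sum_levels_blocks:
  fixes g :: "nat \<Rightarrow> real"
  assumes "\<And>i. i < d \<Longrightarrow> E i = \<infinity> \<Longrightarrow> g i = 0"
  shows "(\<Sum>i<d. g i) = (\<Sum>k<n. g (\<pi> ! k))"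
  using sum_over_distinct_list[OF \<pi>_distinct, of d g] assms \<pi>_set by auto

lemma resc_has_integral:
  "0 \<le> x \<Longrightarrow> (gibbs_resc kT d E lam has_integral (\<Sum>k<n. height k * block_fill width k x)) {0..x}"
  unfolding gibbs_resc_def blk_start_def width_def[symmetric] height_def[symmetric]
  using block_step_integral[of n width x height] width_pos less_imp_le by blast

lemma resc_integral:
  "0 \<le> x \<Longrightarrow> integral {0..x} (gibbs_resc kT d E lam) = (\<Sum>k<n. height k * block_fill width k x)"
  using resc_has_integral integral_unique by blast

lemma resc_integral_ge:
  assumes x: "0 \<le> x" and t: "\<And>i. i < d \<Longrightarrow> 0 \<le> t i \<and> t i \<le> 1"
    and budget: "(\<Sum>i<d. t i * bw kT (E i)) \<le> x"
  shows "(\<Sum>i<d. t i * lam i) \<le> integral {0..x} (gibbs_resc kT d E lam)"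
proof -
  have "(\<Sum>i<d. t i * lam i) = (\<Sum>k<n. t (\<pi> ! k) * height k * width k)"
    by (subst sum_levels_blocks) (simp_all add: lam_infinite lam_block_area mult.assoc)
  also have "\<dots> \<le> (\<Sum>k<n. height k * block_fill width k x)"
  proof (rule greedy_filling_optimal[OF _ height_nonneg height_mono _ x])
    have "(\<Sum>i<d. t i * bw kT (E i)) = (\<Sum>k<n. t (\<pi> ! k) * width k)"
      by (subst sum_levels_blocks) (simp_all add: bw_def width_def)
    then show "(\<Sum>k<n. t (\<pi> ! k) * width k) \<le> x" using budget by simp
  qed (use t \<pi>_nth width_nonneg in auto)
  also have "\<dots> = integral {0..x} (gibbs_resc kT d E lam)" using resc_integral x by simp
  finally show ?thesis .
qed

text \<open>Lower half: the greedy selection (full blocks left of \<open>x\<close>, a fraction of the block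
  containing \<open>x\<close>) attains the integral within the budget.\<close>
lemma resc_integral_attained:
  assumes x: "0 \<le> x"
  shows "\<exists>t. (\<forall>i<d. 0 \<le> t i \<and> t i \<le> 1) \<and> (\<Sum>i<d. t i * bw kT (E i)) \<le> x \<and>
             integral {0..x} (gibbs_resc kT d E lam) = (\<Sum>i<d. t i * lam i)"
proof -
  define pos where "pos i = the_inv_into {..<n} ((!) \<pi>) i" for i
  define t where "t i = (if i \<in> set \<pi> then block_fill width (pos i) x / width (pos i) else 0)" for i
  have inj: "inj_on ((!) \<pi>) {..<n}" by (rule inj_on_nth[OF \<pi>_distinct]) auto
  have t_block: "t (\<pi> ! k) = block_fill width k x / width k" if "k < n" for k
    using that the_inv_into_f_f[OF inj, of k] by (simp add: t_def pos_def)
  have t_bounds: "\<forall>i<d. 0 \<le> t i \<and> t i \<le> 1"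
  proof (intro allI impI)
    fix i assume "i < d"
    show "0 \<le> t i \<and> t i \<le> 1"
    proof (cases "i \<in> set \<pi>")
      case True
      then obtain k where k: "k < n" "i = \<pi> ! k" by (auto simp: in_set_conv_nth)
      then show ?thesis using t_block[OF k(1)] block_fill_width[OF k(1)] width_pos[OF k(1)] by auto
    qed (simp add: t_def)
  qed
  have t_zero: "t i = 0" if "E i = \<infinity>" for i
    using that \<pi>_set by (simp add: t_def)
  have "(\<Sum>i<d. t i * bw kT (E i)) = (\<Sum>k<n. t (\<pi> ! k) * width k)"
    by (subst sum_levels_blocks) (simp_all add: t_zero width_def)
  also have "\<dots> = (\<Sum>k<n. block_fill width k x)"
    using t_block width_pos by (intro sum.cong refl) (simp add: less_imp_neq[symmetric])
  also have "\<dots> = min x (\<Sum>k<n. width k)"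
    using block_fill_sum[of n width x n] width_pos less_imp_le x by blast
  finally have budget: "(\<Sum>i<d. t i * bw kT (E i)) \<le> x" by simp
  have "(\<Sum>i<d. t i * lam i) = (\<Sum>k<n. t (\<pi> ! k) * lam (\<pi> ! k))"
    by (subst sum_levels_blocks) (simp_all add: lam_infinite)
  also have "\<dots> = (\<Sum>k<n. height k * block_fill width k x)"
    using t_block lam_block_area width_pos by (intro sum.cong refl) (simp add: less_imp_neq[symmetric])
  also have "\<dots> = integral {0..x} (gibbs_resc kT d E lam)" using resc_integral x by simp
  finally show ?thesis using t_bounds budget by auto
qed

lemma resc_integral_nonneg: "0 \<le> x \<Longrightarrow> 0 \<le> integral {0..x} (gibbs_resc kT d E lam)"
  using resc_integral height_nonneg block_fill_width by (auto intro!: sum_nonneg)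

definition height_sum :: real where "height_sum = (\<Sum>k<n. height k)"

lemma height_sum_nonneg: "0 \<le> height_sum"
  unfolding height_sum_def using height_nonneg by (auto intro: sum_nonneg)

lemma resc_integral_lipschitz:
  assumes "0 \<le> z" "z \<le> y"
  shows "integral {0..y} (gibbs_resc kT d E lam) - integral {0..z} (gibbs_resc kT d E lam)
         \<le> height_sum * (y - z)"
proof -
  have "integral {0..y} (gibbs_resc kT d E lam) - integral {0..z} (gibbs_resc kT d E lam)
      = (\<Sum>k<n. height k * (block_fill width k y - block_fill width k z))"
    using resc_integral assms by (simp add: sum_subtractf right_diff_distrib)
  also have "\<dots> \<le> (\<Sum>k<n. height k * (y - z))"
    using block_fill_lipschitz width_nonneg height_nonneg assms
    by (intro sum_mono mult_left_mono) auto
  also have "\<dots> = height_sum * (y - z)" by (simp add: height_sum_def sum_distrib_right)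
  finally show ?thesis .
qed

lemma resc_integral_le: "0 \<le> x \<Longrightarrow> integral {0..x} (gibbs_resc kT d E lam) \<le> height_sum * x"
  using resc_integral_lipschitz[of 0 x] by simp

text \<open>Some initial segment carries positive mass: the block of any occupied level.\<close>
lemma resc_integral_pos: "\<exists>b>0. 0 < integral {0..b} (gibbs_resc kT d E lam)"
proof -
  have "(\<Sum>i<d. lam i) = 1" using state by (simp add: is_state_def)
  then obtain i where i: "i < d" "lam i \<noteq> 0" by (metis lessThan_iff sum.neutral zero_neq_one)
  then have lam_pos: "0 < lam i" using lam_nonneg[of i] by simp
  then have "E i \<noteq> \<infinity>" using lam_infinite i by auto
  then have b_pos: "0 < bw kT (E i)" by (simp add: bw_def)
  let ?t = "\<lambda>j. if j = i then 1 else 0 :: real"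
  have "(\<Sum>j<d. ?t j * lam j) \<le> integral {0..bw kT (E i)} (gibbs_resc kT d E lam)"
    using b_pos i by (intro resc_integral_ge) (auto simp: if_distrib[of "\<lambda>c. c * _"] cong: if_cong)
  then show ?thesis
    using b_pos lam_pos i by (auto simp: if_distrib[of "\<lambda>c. c * _"] cong: if_cong)
qed

end


section \<open>Relative mixedness\<close>

definition mix_admissible :: "(real \<Rightarrow> real) \<Rightarrow> (real \<Rightarrow> real) \<Rightarrow> real \<Rightarrow> bool" where
  "mix_admissible f g m \<longleftrightarrow> m > 0 \<and> (\<forall>l\<ge>0. integral {0..l} f \<ge> integral {0..l * m} g)"

lemma mix_admissible_bounded:
  assumes b: "0 < b" and mass: "0 < integral {0..b} g"
    and f_linear: "\<And>l. 0 \<le> l \<Longrightarrow> integral {0..l} f \<le> C * l"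
    and adm: "mix_admissible f g m"
  shows "m \<le> C * b / integral {0..b} g"
proof -
  have m: "0 < m" using adm by (simp add: mix_admissible_def)
  then have "integral {0..b} g = integral {0..(b / m) * m} g" by simp
  also have "\<dots> \<le> integral {0..b / m} f"
    using adm m b unfolding mix_admissible_def by (metis divide_nonneg_pos less_imp_le)
  also have "\<dots> \<le> C * (b / m)" using f_linear[of "b / m"] m b by simp
  finally have "m * integral {0..b} g \<le> C * b" using m by (simp add: field_simps)
  then show ?thesis using mass by (simp add: field_simps)
qed

text \<open>When admissible ratios are bounded and the integral of \<open>g\<close> is Lipschitz, the set of
  admissible ratios is closed, so \<open>relmix\<close> is its supremum and dominates every member.\<close>
lemma relmix_ge:
  assumes adm: "mix_admissible f g m0" and bounded: "\<And>m. mix_admissible f g m \<Longrightarrow> m \<le> B"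
    and C: "0 \<le> C"
    and lip: "\<And>y z. 0 \<le> z \<Longrightarrow> z \<le> y \<Longrightarrow> integral {0..y} g - integral {0..z} g \<le> C * (y - z)"
  shows "m0 \<le> relmix f g"
proof -
  define M where "M = Sup (Collect (mix_admissible f g))"
  have ne: "Collect (mix_admissible f g) \<noteq> {}" using adm by auto
  have bdd: "bdd_above (Collect (mix_admissible f g))" using bounded by (intro bdd_aboveI[of _ B]) auto
  have le_M: "m \<le> M" if "mix_admissible f g m" for m
    unfolding M_def using that bdd by (auto intro: cSup_upper)
  have M_pos: "0 < M" using le_M[OF adm] adm by (simp add: mix_admissible_def)
  have "integral {0..l * M} g \<le> integral {0..l} f" if l: "0 \<le> l" for l
  proof (rule field_le_epsilon)
    fix e :: real assume e: "0 < e"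
    define eta where "eta = e / (C * l + 1)"
    have Cl: "0 \<le> C * l" using C l by simp
    have eta: "0 < eta" using e Cl by (simp add: eta_def)
    have "C * l * eta = e * (C * l / (C * l + 1))" by (simp add: eta_def)
    also have "\<dots> \<le> e" using e Cl by (intro mult_left_le) auto
    finally have C_eta: "C * l * eta \<le> e" .
    obtain m where m: "mix_admissible f g m" "M - eta < m"
      using less_cSup_iff[OF ne bdd, of "M - eta"] eta unfolding M_def by auto
    have m_pos: "0 < m" using m(1) by (simp add: mix_admissible_def)
    have "integral {0..l * M} g - integral {0..l * m} g \<le> C * (l * M - l * m)"
      using lip l m_pos le_M[OF m(1)] by (intro lip) (auto intro: mult_left_mono)
    also have "\<dots> \<le> C * l * eta"
      using m(2) C l by (simp add: right_diff_distrib[symmetric] mult.assoc mult_left_mono)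
    finally have "integral {0..l * M} g \<le> integral {0..l * m} g + e" using C_eta by simp
    moreover have "integral {0..l * m} g \<le> integral {0..l} f"
      using m(1) l by (simp add: mix_admissible_def)
    ultimately show "integral {0..l * M} g \<le> integral {0..l} f + e" by simp
  qed
  then have "mix_admissible f g M" using M_pos by (simp add: mix_admissible_def)
  then have "relmix f g = M"
    unfolding relmix_def mix_admissible_def[symmetric] by (auto intro: Greatest_equality le_M)
  then show ?thesis using le_M[OF adm] by simp
qed


section \<open>The work bound\<close>

text \<open>If, for every level \<open>i\<close>, succeeding (work at least \<open>W\<close>) and ending
  in \<open>i\<close> has probability \<open>p * nu i\<close>, then \<open>p\<close> times the mass of \<open>G(sigma)\<close> on
  \<open>[0, l e^(W/kT)]\<close> is at most the mass of \<open>G(rho)\<close> on \<open>[0, l]\<close>: the greedy payoff for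
  \<open>sigma\<close> is pulled back through the strategy by the reward recursion, and the second law
  turns its budget \<open>l e^(W/kT)\<close> into the budget \<open>l\<close> for \<open>rho\<close>.\<close>
lemma success_integral_bound:
  assumes kT: "kT > 0" and rho: "is_state d E lam" and sigma: "is_state d F nu"
    and valid: "valid_strategy kT d E ss" and final: "\<forall>i<d. final_energies E ss i = F i"
    and split: "\<forall>i<d. event_prob d lam ss (\<lambda>xs. ereal W \<le> path_work E ss xs \<and> last xs = i) = p * nu i"
    and l: "0 \<le> l"
  shows "p * integral {0..l * exp (W / kT)} (gibbs_resc kT d F nu) \<le> integral {0..l} (gibbs_resc kT d E lam)"
proof -
  interpret rho: gibbs_rescaling kT d E lam using kT rho by unfold_locales
  interpret sigma: gibbs_rescaling kT d F nu using kT sigma by unfold_locales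
  define x where "x = l * exp (W / kT)"
  have x: "0 \<le> x" using l by (simp add: x_def)
  obtain t where t: "\<forall>i<d. 0 \<le> t i \<and> t i \<le> 1" "(\<Sum>i<d. t i * bw kT (F i)) \<le> x"
      "integral {0..x} (gibbs_resc kT d F nu) = (\<Sum>i<d. t i * nu i)"
    using sigma.resc_integral_attained[OF x] by blast
  define u where "u j = reward d E ss (\<lambda>r. ereal W \<le> r) t j" for j
  have u: "0 \<le> u j \<and> u j \<le> 1" if "j < d" for j
    using reward_nonneg[OF valid _ that] reward_le_one[OF valid t(1) that] t(1) by (simp add: u_def)
  have "p * integral {0..x} (gibbs_resc kT d F nu)
      = (\<Sum>i<d. t i * event_prob d lam ss (\<lambda>xs. ereal W \<le> path_work E ss xs \<and> last xs = i))"
    using split by (simp add: t(3) sum_distrib_left mult_ac)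
  also have "\<dots> = (\<Sum>j<d. u j * lam j)"
    unfolding event_sum_reward u_def by (simp add: mult.commute)
  finally have mass: "p * integral {0..x} (gibbs_resc kT d F nu) = (\<Sum>j<d. u j * lam j)" .
  have "exp (W / kT) * (\<Sum>j<d. u j * bw kT (E j))
      = (\<Sum>j<d. bw kT (E j) * exp (W / kT) * reward d E ss (\<lambda>r. ereal W \<le> r) t j)"
    by (simp add: sum_distrib_left u_def mult_ac)
  also have "\<dots> \<le> (\<Sum>i<d. bw kT (final_energies E ss i) * t i)"
    using work_bound[OF kT valid, of t "\<lambda>_. W"] rho.E_not_minf t(1) by simp
  also have "\<dots> \<le> exp (W / kT) * l"
    using final t(2) by (simp add: x_def mult.commute)
  finally have budget: "(\<Sum>j<d. u j * bw kT (E j)) \<le> l" by simp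
  show ?thesis
    using rho.resc_integral_ge[OF l u budget] mass by (simp add: x_def)
qed

theorem theorem1:
  fixes kB T eps W :: real and d :: nat
    and E F :: "nat \<Rightarrow> ereal" and lam nu :: "nat \<Rightarrow> real" and ss :: "step list"
  assumes "kB > 0" and "T > 0"
    and "is_state d E lam" and "is_state d F nu"
    and "0 \<le> eps" and "eps < 1"
    and "valid_strategy (kB * T) d E ss"
    and "\<forall>i<d. final_energies E ss i = F i"
    and "event_prob d lam ss (\<lambda>xs. ereal W \<le> path_work E ss xs) \<ge> 1 - eps"
    and "\<forall>i<d. event_prob d lam ss (\<lambda>xs. ereal W \<le> path_work E ss xs \<and> last xs = i)
                / event_prob d lam ss (\<lambda>xs. ereal W \<le> path_work E ss xs) = nu i"
  shows "W \<le> W_eps (kB * T) d E lam F nu eps"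
proof -
  define kT where "kT = kB * T"
  have kT: "kT > 0" using assms(1,2) by (simp add: kT_def)
  interpret rho: gibbs_rescaling kT d E lam using kT assms(3) by unfold_locales
  interpret sigma: gibbs_rescaling kT d F nu using kT assms(4) by unfold_locales
  define p where "p = event_prob d lam ss (\<lambda>xs. ereal W \<le> path_work E ss xs)"
  have p: "1 - eps \<le> p" "0 < p" using assms(6,9) by (simp_all add: p_def)
  have split: "\<forall>i<d. event_prob d lam ss (\<lambda>xs. ereal W \<le> path_work E ss xs \<and> last xs = i) = p * nu i"
    using assms(10) p(2) by (simp add: p_def field_simps)
  let ?f = "\<lambda>x. gibbs_resc kT d E lam x / (1 - eps)" and ?g = "gibbs_resc kT d F nu"
  have "(1 - eps) * integral {0..l * exp (W / kT)} ?g \<le> integral {0..l} (gibbs_resc kT d E lam)"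
    if "0 \<le> l" for l
    using success_integral_bound[OF kT assms(3,4) assms(7)[folded kT_def] assms(8) split that]
      mult_right_mono[OF p(1) sigma.resc_integral_nonneg[of "l * exp (W / kT)"]] that by simp
  then have adm: "mix_admissible ?f ?g (exp (W / kT))"
    using assms(6) by (simp add: mix_admissible_def field_simps)
  obtain b where b: "0 < b" "0 < integral {0..b} ?g" using sigma.resc_integral_pos by blast
  have "exp (W / kT) \<le> relmix ?f ?g"
    using relmix_ge[OF adm mix_admissible_bounded[OF b, of ?f "rho.height_sum / (1 - eps)"]
        sigma.height_sum_nonneg sigma.resc_integral_lipschitz]
      rho.resc_integral_le assms(6) by (simp add: divide_right_mono)
  then have "W / kT \<le> ln (relmix ?f ?g)"
    by (metis exp_gt_zero ln_exp ln_le_cancel_iff order_less_le_trans)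
  then show ?thesis using kT by (simp add: W_eps_def kT_def pos_divide_le_eq mult.commute)
qed

end
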